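(* Let $q$ be odd, $\alpha,\beta\in\mathbb{F}_{q^2}$ with $\alpha\ne0$ and $(\beta^q-\beta)^2+4\alpha^{q+1}$ a nonsquare in $\mathbb{F}_q$, let $R_1=(0,\epsilon,1)$, $U_\infty=(1,0,0)$, and let $\ell$ be a line of $\mathrm{PG}(2,q^2)$ through $U_\infty$. (1) If $\alpha$ is a nonsquare in $\mathbb{F}_{q^2}$, then $|\ell\cap\mathrm{pedal}(R_1)|\in\{0,2\}$. (2) If $\alpha$ is a nonzero square in $\mathbb{F}_{q^2}$, then $|\ell\cap\mathrm{pedal}(R_1)|\in\{0,2,4\}$. Further, there exist at least $\frac{q-3}{4}$ lines meeting $\mathrm{pedal}(R_1)$ in exactly $4$ points, and every such line passes through $U_\infty$.
   Context: Points of $\mathrm{PG}(2,q^2)$ have homogeneous coordinates $(x,y,z)$. $\zeta$ is a primitive element of $\mathbb{F}_{q^2}$ and $\epsilon=\zeta^{(q+1)/2}$. $\mathcal U_{\alpha\beta}=\{(x,\alpha x^2+\beta x^{q+1}+r,1): x\in\mathbb{F}_{q^2}, r\in\mathbb{F}_q\}\cup\{(0,1,0)\}$, which under the hypotheses is a unital (a set of $q^3+1$ points meeting every line in $1$ or $q+1$ points), and $R_1\notin\mathcal U_{\alpha\beta}$. For a point $P$ not on the unital, $\mathrm{pedal}(P)$ is the set of points of contact of the $q+1$ tangent lines (lines meeting the unital in exactly one point) through $P$. *)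

theory Defs
  imports Complex_Main
begin

definition smul3 :: "'a::field \<Rightarrow> 'a \<times> 'a \<times> 'a \<Rightarrow> 'a \<times> 'a \<times> 'a" where
  "smul3 c v = (case v of (x, y, z) \<Rightarrow> (c * x, c * y, c * z))"

definition pt :: "'a::field \<times> 'a \<times> 'a \<Rightarrow> ('a \<times> 'a \<times> 'a) set" where
  "pt v = {smul3 c v | c. c \<noteq> 0}"

definition pg_points :: "('a::field \<times> 'a \<times> 'a) set set" where
  "pg_points = {pt v | v. v \<noteq> (0, 0, 0)}"

definition line_of :: "'a::field \<times> 'a \<times> 'a \<Rightarrow> ('a \<times> 'a \<times> 'a) set set" where
  "line_of w = (case w of (a, b, c) \<Rightarrow>
     {pt (x, y, z) | x y z. (x, y, z) \<noteq> (0, 0, 0) \<and> a * x + b * y + c * z = 0})"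

definition pg_lines :: "('a::field \<times> 'a \<times> 'a) set set set" where
  "pg_lines = {line_of w | w. w \<noteq> (0, 0, 0)}"

definition subfield_q :: "nat \<Rightarrow> 'a::field set" where
  "subfield_q q = {x. x ^ q = x}"

definition primitive_elem :: "'a::field \<Rightarrow> bool" where
  "primitive_elem z \<longleftrightarrow> (\<forall>x. x \<noteq> 0 \<longrightarrow> (\<exists>k::nat. x = z ^ k))"

definition is_square :: "'a::field \<Rightarrow> bool" where
  "is_square a \<longleftrightarrow> (\<exists>y. y ^ 2 = a)"

definition nonsquare_in_Fq :: "nat \<Rightarrow> 'a::field \<Rightarrow> bool" where
  "nonsquare_in_Fq q d \<longleftrightarrow> d \<in> subfield_q q \<and> \<not> (\<exists>y \<in> subfield_q q. y ^ 2 = d)"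

definition unital_ab :: "nat \<Rightarrow> 'a::field \<Rightarrow> 'a \<Rightarrow> ('a \<times> 'a \<times> 'a) set set" where
  "unital_ab q \<alpha> \<beta> =
     {pt (x, \<alpha> * x ^ 2 + \<beta> * x ^ (q + 1) + r, 1) | x r. r \<in> subfield_q q} \<union> {pt (0, 1, 0)}"

definition tangent_line :: "('a::field \<times> 'a \<times> 'a) set set \<Rightarrow> ('a \<times> 'a \<times> 'a) set set \<Rightarrow> bool" where
  "tangent_line U L \<longleftrightarrow> L \<in> pg_lines \<and> card (L \<inter> U) = 1"

definition pedal :: "('a::field \<times> 'a \<times> 'a) set set \<Rightarrow> ('a \<times> 'a \<times> 'a) set \<Rightarrow> ('a \<times> 'a \<times> 'a) set set" where
  "pedal U P = {Q. \<exists>L. tangent_line U L \<and> P \<in> L \<and> L \<inter> U = {Q}}"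

end

theory Submission
  imports Defs "HOL-Library.Cardinality" "HOL-Computational_Algebra.Primes"
    "HOL-Computational_Algebra.Polynomial" "HOL-Number_Theory.Cong"
begin

text \<open>
  Write \<open>frob x = x\<^sup>q\<close>, \<open>\<delta> = frob \<beta> - \<beta>\<close> and \<open>disc = \<delta>\<^sup>2 + 4 \<alpha> frob \<alpha>\<close>, a nonsquare of \<open>F\<^sub>q\<close>.
  Every line through \<open>R\<^sub>1 = (0, \<epsilon>, 1)\<close> other than \<open>x = 0\<close> is \<open>y = m x + \<epsilon>\<close> with
  \<open>m = 2 \<alpha> c - \<delta> frob c\<close> for a unique \<open>c\<close>, and it meets the unital in the points with
  \<open>qf (x - c) = qf c - 2 \<epsilon>\<close>, where \<open>qf c = frob \<alpha> (frob c)\<^sup>2 - \<alpha> c\<^sup>2 + \<delta> c frob c\<close> is anisotropic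
  because \<open>disc\<close> is a nonsquare. So the line is tangent iff \<open>qf c = 2 \<epsilon>\<close>, and then it touches
  the unital at \<open>(c, height c + \<epsilon>)\<close> with \<open>height c = 2 \<alpha> c\<^sup>2 - \<delta> c frob c\<close>; since \<open>qf\<close> is a
  multiple of a norm, the pedal has \<open>q + 1\<close> points.

  A line through \<open>U\<^sub>\<infinity>\<close> is \<open>z = 0\<close> or \<open>y = k\<close>, and its pedal points are the \<open>c\<close> with
  \<open>qf c = 2 \<epsilon>\<close> and \<open>height c = k - \<epsilon>\<close>. They come in pairs \<open>\<plusminus>c\<close>, their norms \<open>c frob c\<close> are
  roots of a quadratic over \<open>F\<^sub>q\<close>, and raising \<open>c\<^sup>2 = (height c + \<delta> c frob c) / (2 \<alpha>)\<close> to the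
  power \<open>(q + 1)/2\<close> shows that both roots are attained exactly when \<open>\<alpha>\<close> is a square. In the
  square case exactly two points require a double root, which happens for at most two values
  of \<open>k\<close>, and counting the \<open>q + 1\<close> pedal points gives at least \<open>(q - 3)/4\<close> lines with four.
  A line not through \<open>U\<^sub>\<infinity>\<close> carries at most two pedal points, since along it \<open>qf\<close> is
  quadratic in an \<open>F\<^sub>q\<close>-parameter with a known root.
\<close>

section \<open>Finite fields\<close>

lemma power_card_UNIV_eq_self:
  fixes x :: "'a::{field,finite}"
  shows "x ^ CARD('a) = x"
proof (cases "x = 0")
  case True
  then show ?thesis by (simp add: finite_UNIV_card_ge_0)
next
  case False
  let ?U = "UNIV - {0::'a}"
  have "(\<Prod>y\<in>?U. x * y) = (\<Prod>y\<in>?U. y)"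
    by (rule prod.reindex_bij_witness[of _ "\<lambda>y. y / x" "\<lambda>y. x * y"]) (use False in auto)
  then have "(\<Prod>y\<in>?U. y) = (\<Prod>y\<in>?U. x * y)" ..
  also have "\<dots> = x ^ card ?U * (\<Prod>y\<in>?U. y)"
    by (simp add: prod.distrib)
  finally have "1 * (\<Prod>y\<in>?U. y) = x ^ card ?U * (\<Prod>y\<in>?U. y)" by simp
  moreover have "(\<Prod>y\<in>?U. y) \<noteq> 0" by simp
  ultimately have "1 = x ^ card ?U" by (rule mult_right_cancel[THEN iffD1, rotated])
  moreover have "CARD('a) = Suc (card ?U)"
    using finite_UNIV_card_ge_0[where 'a = 'a] by (simp add: card_Diff_singleton)
  ultimately show ?thesis by (metis power_Suc mult_1_right)
qed

lemma power_card_UNIV_minus_1: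
  fixes x :: "'a::{field,finite}"
  assumes "x \<noteq> 0"
  shows "x ^ (CARD('a) - 1) = 1"
proof -
  have "CARD('a) = Suc (CARD('a) - 1)"
    using finite_UNIV_card_ge_0[where 'a = 'a] by simp
  then have "x ^ (CARD('a) - 1) * x = x"
    using power_card_UNIV_eq_self[of x] by (metis power_Suc2)
  then show ?thesis using assms by simp
qed

lemma card_UNIV_field_ge_2: "2 \<le> CARD('a::{field,finite})"
proof -
  have "card {0::'a, 1} \<le> CARD('a)" by (rule card_mono) simp_all
  then show ?thesis by simp
qed

text \<open>Additively closed sets are vector spaces over the prime field, so \<open>CARD('a)\<close> is a power
  of \<open>CHAR('a)\<close>; this is what makes \<open>x \<mapsto> x\<^sup>q\<close> additive below.\<close>

definition add_closed :: "'a::field set \<Rightarrow> bool" where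
  "add_closed V \<longleftrightarrow> 0 \<in> V \<and> (\<forall>x\<in>V. \<forall>y\<in>V. x + y \<in> V)"

lemma add_closed_of_nat_mult:
  "add_closed V \<Longrightarrow> x \<in> V \<Longrightarrow> of_nat k * x \<in> V"
  by (induction k) (auto simp: add_closed_def algebra_simps)

lemma add_closed_uminus:
  fixes V :: "'a::{field,finite} set"
  assumes "add_closed V" "x \<in> V"
  shows "- x \<in> V"
proof -
  have "CHAR('a) > 0" by (simp add: finite_imp_CHAR_pos)
  then have "- x = of_nat (CHAR('a) - 1) * x" by (simp add: of_nat_diff)
  then show ?thesis using add_closed_of_nat_mult[OF assms] by simp
qed

lemma add_closed_of_nat_mult_notin:
  fixes V :: "'a::{field,finite} set"
  assumes V: "add_closed V" and x: "x \<notin> V" and d: "0 < d" "d < CHAR('a)"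
  shows "of_nat d * x \<notin> V"
proof
  assume dx: "of_nat d * x \<in> V"
  have "prime CHAR('a)" by (simp add: finite_imp_CHAR_pos prime_CHAR_semidom)
  then have "coprime d CHAR('a)"
    using d by (metis coprime_commute nat_dvd_not_less prime_imp_coprime)
  then obtain e where "[d * e = 1] (mod CHAR('a))" using cong_solve_coprime_nat by auto
  then have "(of_nat e * of_nat d :: 'a) = 1"
    by (metis mult.commute of_nat_1 of_nat_eq_iff_cong_CHAR of_nat_mult)
  then have "of_nat e * (of_nat d * x) = x" by (metis mult.assoc mult_1)
  then show False using add_closed_of_nat_mult[OF V dx, of e] x by argo
qed

lemma add_closed_add_multiples:
  assumes V: "add_closed V"
  shows "add_closed {v + of_nat k * x | v k. v \<in> V}"
  unfolding add_closed_def
proof (intro conjI ballI)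
  show "0 \<in> {v + of_nat k * x | v k. v \<in> V}"
    using V by (auto simp: add_closed_def intro!: exI[of _ 0])
next
  fix a b assume "a \<in> {v + of_nat k * x | v k. v \<in> V}" "b \<in> {v + of_nat k * x | v k. v \<in> V}"
  then obtain v k v' k' where "a = v + of_nat k * x" "b = v' + of_nat k' * x" "v \<in> V" "v' \<in> V"
    by auto
  then show "a + b \<in> {v + of_nat k * x | v k. v \<in> V}"
    using V by (auto simp: add_closed_def algebra_simps intro!: exI[of _ "v + v'"] exI[of _ "k + k'"])
qed

lemma card_add_multiples:
  fixes V :: "'a::{field,finite} set"
  assumes V: "add_closed V" and x: "x \<notin> V"
  shows "card {v + of_nat k * x | v k. v \<in> V} = CHAR('a) * card V"
proof -
  let ?p = "CHAR('a)" and ?f = "\<lambda>(v, k). v + of_nat k * x"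
  have "v + of_nat k * x \<in> ?f ` (V \<times> {..<?p})" if "v \<in> V" for v k
  proof -
    have "(of_nat k :: 'a) = of_nat (k mod ?p)"
      by (simp add: of_nat_eq_iff_cong_CHAR cong_def)
    moreover have "k mod ?p < ?p" by (simp add: finite_imp_CHAR_pos)
    ultimately show ?thesis using that by (intro image_eqI[of _ _ "(v, k mod ?p)"]) auto
  qed
  then have "{v + of_nat k * x | v k. v \<in> V} = ?f ` (V \<times> {..<?p})" by auto
  moreover have "k = k'"
    if "v + of_nat k * x = v' + of_nat k' * x" "k' \<le> k" "k < ?p" "v \<in> V" "v' \<in> V" for v v' k k'
  proof (rule ccontr)
    assume "k \<noteq> k'"
    have "0 < k - k'" "k - k' < ?p" using that(2,3) \<open>k \<noteq> k'\<close> by auto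
    then have "of_nat (k - k') * x \<notin> V" by (rule add_closed_of_nat_mult_notin[OF V x])
    moreover have "of_nat (k - k') * x = v' + - v"
      using that(1,2) by (simp add: of_nat_diff algebra_simps)
    moreover have "v' + - v \<in> V"
      using V that(4,5) add_closed_uminus by (metis add_closed_def)
    ultimately show False by simp
  qed
  then have "inj_on ?f (V \<times> {..<?p})"
    by (intro inj_onI) (clarsimp, metis add_right_cancel le_cases)
  ultimately show ?thesis by (simp add: card_image card_cartesian_product)
qed

lemma card_UNIV_CHAR_power: "\<exists>n. CARD('a::{field,finite}) = CHAR('a) ^ n"
proof -
  have extend: "\<exists>n. CARD('a) = CHAR('a) ^ n"
    if "add_closed V" "card V = CHAR('a) ^ j" for V :: "'a set" and j
    using that
  proof (induction "CARD('a) - card V" arbitrary: V j rule: less_induct)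
    case less
    show ?case
    proof (cases "V = UNIV")
      case True
      then show ?thesis using less.prems by metis
    next
      case False
      then obtain x where x: "x \<notin> V" by auto
      define W where "W = {v + of_nat k * x | v k. v \<in> V}"
      have "V \<subseteq> W" unfolding W_def by (force intro: exI[of _ 0])
      moreover have "x \<in> W"
        unfolding W_def using less.prems(1)
        by (auto simp: add_closed_def intro!: exI[of _ "0::'a"] exI[of _ "1::nat"])
      ultimately have "card V < card W" using x by (intro psubset_card_mono) auto
      moreover have "card W \<le> CARD('a)" by (simp add: card_mono)
      moreover have "add_closed W" "card W = CHAR('a) ^ Suc j"
        using add_closed_add_multiples[OF less.prems(1)] card_add_multiples[OF less.prems(1) x]
          less.prems(2) unfolding W_def by simp_all
      ultimately show ?thesis using less.hyps[of W "Suc j"] by simp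
    qed
  qed
  show ?thesis using extend[of "{0}" 0] by (simp add: add_closed_def)
qed

lemma two_neq_zero_if_odd_card:
  assumes "odd CARD('a::{field,finite})"
  shows "(2::'a) \<noteq> 0"
proof
  assume "(2::'a) = 0"
  then have "CHAR('a) dvd 2" by (metis of_nat_eq_0_iff_char_dvd of_nat_numeral)
  moreover have "prime CHAR('a)" by (simp add: finite_imp_CHAR_pos prime_CHAR_semidom)
  ultimately have "CHAR('a) = 2" using primes_dvd_imp_eq two_is_prime_nat by blast
  then obtain n where n: "CARD('a) = 2 ^ n" using card_UNIV_CHAR_power by metis
  then have "n \<noteq> 0" using card_UNIV_field_ge_2[where 'a = 'a] by (intro notI) simp
  then show False using assms n by simp
qed

lemma card_UNIV_minus_1_eq_double_half:
  assumes "odd CARD('a::{field,finite})"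
  shows "CARD('a) - 1 = 2 * ((CARD('a) - 1) div 2)" "(CARD('a) - 1) div 2 > 0"
  using assms card_UNIV_field_ge_2[where 'a = 'a] by (auto elim!: oddE)

lemma primitive_elem_power_eq_1_dvd:
  fixes \<zeta> :: "'a::{field,finite}"
  assumes \<zeta>: "primitive_elem \<zeta>" and k: "\<zeta> ^ k = 1"
  shows "(CARD('a) - 1) dvd k"
proof (cases "k = 0")
  case False
  let ?n = "CARD('a) - 1"
  define r where "r = k mod ?n"
  have "\<zeta> \<noteq> 0" using k False by (intro notI) (simp add: zero_power)
  have "\<zeta> ^ k = (\<zeta> ^ ?n) ^ (k div ?n) * \<zeta> ^ r"
    unfolding r_def by (simp flip: power_mult power_add)
  then have r1: "\<zeta> ^ r = 1" using k power_card_UNIV_minus_1[OF \<open>\<zeta> \<noteq> 0\<close>] by simp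
  have "r = 0"
  proof (rule ccontr)
    assume "r \<noteq> 0"
    have "UNIV - {0} \<subseteq> (\<lambda>j. \<zeta> ^ j) ` {..<r}"
    proof
      fix x :: 'a assume "x \<in> UNIV - {0}"
      then obtain j where "x = \<zeta> ^ j" using \<zeta> unfolding primitive_elem_def by auto
      also have "\<zeta> ^ j = (\<zeta> ^ r) ^ (j div r) * \<zeta> ^ (j mod r)"
        by (simp flip: power_mult power_add)
      finally show "x \<in> (\<lambda>j. \<zeta> ^ j) ` {..<r}" using r1 \<open>r \<noteq> 0\<close> by simp
    qed
    then have "card (UNIV - {0::'a}) \<le> card ((\<lambda>j. \<zeta> ^ j) ` {..<r})"
      by (intro card_mono) simp_all
    also have "\<dots> \<le> r" using card_image_le[of "{..<r}" "\<lambda>j. \<zeta> ^ j"] by simp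
    finally have "?n \<le> r" by (simp add: card_Diff_singleton)
    moreover have "r < ?n"
      unfolding r_def using card_UNIV_field_ge_2[where 'a = 'a] by simp
    ultimately show False by simp
  qed
  then show ?thesis unfolding r_def by (simp add: dvd_eq_mod_eq_0)
qed simp

lemma primitive_elem_power_half:
  fixes \<zeta> :: "'a::{field,finite}"
  assumes odd: "odd CARD('a)" and \<zeta>: "primitive_elem \<zeta>"
  shows "\<zeta> ^ ((CARD('a) - 1) div 2) = -1"
proof -
  define h where "h = (CARD('a) - 1) div 2"
  note h = card_UNIV_minus_1_eq_double_half[OF odd, folded h_def]
  have "\<zeta> \<noteq> 0"
  proof
    assume "\<zeta> = 0"
    obtain k where "-1 = \<zeta> ^ k" using \<zeta> unfolding primitive_elem_def by fastforce
    then have "-1 = (0::'a) \<or> -1 = (1::'a)" using \<open>\<zeta> = 0\<close> by (simp add: power_0_left)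
    then show False using two_neq_zero_if_odd_card[OF odd] by (simp add: eq_neg_iff_add_eq_0)
  qed
  have "(\<zeta> ^ h) ^ 2 = \<zeta> ^ (CARD('a) - 1)"
    unfolding h(1) by (simp add: power_mult mult.commute)
  then have "(\<zeta> ^ h) ^ 2 = 1" using power_card_UNIV_minus_1[OF \<open>\<zeta> \<noteq> 0\<close>] by simp
  moreover have "\<zeta> ^ h \<noteq> 1"
  proof
    assume "\<zeta> ^ h = 1"
    then have "2 * h dvd h" using primitive_elem_power_eq_1_dvd[OF \<zeta>] h(1) by metis
    then show False using h(2) by (simp add: dvd_imp_le)
  qed
  ultimately show ?thesis unfolding h_def by (simp add: power2_eq_1_iff)
qed

lemma is_square_iff_power_half:
  fixes \<zeta> x :: "'a::{field,finite}"
  assumes odd: "odd CARD('a)" and \<zeta>: "primitive_elem \<zeta>" and x: "x \<noteq> 0"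
  shows "is_square x \<longleftrightarrow> x ^ ((CARD('a) - 1) div 2) = 1"
proof -
  define h where "h = (CARD('a) - 1) div 2"
  note h = card_UNIV_minus_1_eq_double_half[OF odd, folded h_def]
  have "is_square x \<longleftrightarrow> x ^ h = 1"
  proof
    assume "is_square x"
    then obtain y where y: "y ^ 2 = x" unfolding is_square_def by blast
    then have "x ^ h = y ^ (CARD('a) - 1)" unfolding h(1) by (simp add: power_mult)
    then show "x ^ h = 1" using x y power_card_UNIV_minus_1[of y] by auto
  next
    assume xh: "x ^ h = 1"
    obtain k where k: "x = \<zeta> ^ k" using \<zeta> x unfolding primitive_elem_def by blast
    then have "\<zeta> ^ (k * h) = 1" using xh by (simp add: power_mult)
    then have "h * 2 dvd h * k"
      using primitive_elem_power_eq_1_dvd[OF \<zeta>] h(1) by (metis mult.commute)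
    then have "even k" using h(2) by simp
    then obtain j where "k = 2 * j" by blast
    then have "x = (\<zeta> ^ j) ^ 2" using k by (simp add: power_mult mult.commute)
    then show "is_square x" unfolding is_square_def by blast
  qed
  then show ?thesis unfolding h_def .
qed

lemma card_roots_power_eq_poly_le:
  fixes r :: "'a::idom poly"
  assumes "degree r < n"
  shows "card {x. x ^ n = poly r x} \<le> n"
proof -
  define p where "p = monom 1 n - r"
  have "coeff p n = 1" using assms unfolding p_def by (simp add: coeff_eq_0)
  then have "p \<noteq> 0" by auto
  moreover have "degree p \<le> n"
    unfolding p_def using assms by (intro degree_diff_le) (simp_all add: degree_monom_le)
  moreover have "{x. x ^ n = poly r x} = {x. poly p x = 0}"
    unfolding p_def by (simp add: poly_monom)
  ultimately show ?thesis using card_poly_roots_bound[of p] by simp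
qed

lemma quadratic_two_roots:
  fixes a b c x y :: "'a::field"
  assumes "a * x ^ 2 - b * x - c = 0" "a * y ^ 2 - b * y - c = 0" "x \<noteq> y"
  shows "a * (x + y) = b" "a * (x * y) = - c"
proof -
  have "(x - y) * (a * (x + y) - b) = 0" using assms(1,2)
    by (simp add: algebra_simps power2_eq_square)
  then show sum: "a * (x + y) = b" using assms(3) by simp
  have "- (a * (x * y)) = c" using assms(1) sum[symmetric]
    by (simp add: algebra_simps power2_eq_square)
  then show "a * (x * y) = - c" by (metis minus_minus)
qed

lemma card_quadratic_roots_le_2:
  fixes a b c :: "'a::idom"
  assumes "a \<noteq> 0"
  shows "card {x. a * x ^ 2 + b * x + c = 0} \<le> 2"
proof -
  have "coeff [:c, b, a:] 2 = a" by (simp add: numeral_2_eq_2)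
  then have "[:c, b, a:] \<noteq> 0" using assms by auto
  moreover have "degree [:c, b, a:] \<le> 2" by (simp add: degree_pCons_le)
  moreover have "{x. a * x ^ 2 + b * x + c = 0} = {x. poly [:c, b, a:] x = 0}"
    by (simp add: algebra_simps power2_eq_square)
  ultimately show ?thesis using card_poly_roots_bound[of "[:c, b, a:]"] by simp
qed

lemma card_eq_sum_card_fibres:
  assumes "finite A" "finite B" "f ` A \<subseteq> B"
  shows "card A = (\<Sum>b\<in>B. card {a \<in> A. f a = b})"
  using sum.group[OF assms, of "\<lambda>_. 1::nat"] by simp

section \<open>The projective plane\<close>

lemma smul3_Pair [simp]: "smul3 c (x, y, z) = (c * x, c * y, c * z)"
  unfolding smul3_def by simp

lemma pt_smul3:
  fixes v :: "'a::field \<times> 'a \<times> 'a"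
  assumes c: "c \<noteq> 0"
  shows "pt (smul3 c v) = pt v"
proof -
  obtain x y z where v: "v = (x, y, z)" by (cases v)
  have "smul3 d (smul3 c v) \<in> pt v" if "d \<noteq> 0" for d
    unfolding pt_def v using that c by (auto intro!: exI[of _ "d * c"] simp: mult.assoc)
  moreover have "smul3 d v \<in> pt (smul3 c v)" if "d \<noteq> 0" for d
    unfolding pt_def v using that c by (auto intro!: exI[of _ "d / c"])
  ultimately show ?thesis unfolding pt_def by blast
qed

lemma pt_eq_iff: "pt v = pt w \<longleftrightarrow> (\<exists>c. c \<noteq> 0 \<and> w = smul3 c (v::'a::field \<times> 'a \<times> 'a))"
proof
  assume "pt v = pt w"
  moreover have "w \<in> pt w" unfolding pt_def by (cases w) (auto intro!: exI[of _ 1])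
  ultimately show "\<exists>c. c \<noteq> 0 \<and> w = smul3 c v" unfolding pt_def by auto
qed (auto simp: pt_smul3)

lemma pt_affine_eq_iff [simp]: "pt (x, y, 1) = pt (x', y', (1::'a::field)) \<longleftrightarrow> x = x' \<and> y = y'"
  unfolding pt_eq_iff by auto

lemma pt_affine_neq_infinite [simp]:
  "pt (x, y, 1) \<noteq> pt (a, b, (0::'a::field))" "pt (a, b, 0) \<noteq> pt (x, y, (1::'a::field))"
  unfolding pt_eq_iff by auto

lemma pt_in_line_of_iff:
  assumes "(x, y, z) \<noteq> (0, 0, 0)"
  shows "pt (x, y, z) \<in> line_of (a, b, c) \<longleftrightarrow> a * x + b * y + c * (z::'a::field) = 0"
proof
  assume "pt (x, y, z) \<in> line_of (a, b, c)"
  then obtain x' y' z' where e: "pt (x, y, z) = pt (x', y', z')" "a * x' + b * y' + c * z' = 0"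
    unfolding line_of_def by auto
  then obtain d where "d \<noteq> 0" "(x', y', z') = smul3 d (x, y, z)" unfolding pt_eq_iff by blast
  then have "d * (a * x + b * y + c * z) = 0" using e(2) by (simp add: algebra_simps)
  then show "a * x + b * y + c * z = 0" using \<open>d \<noteq> 0\<close> by simp
next
  assume "a * x + b * y + c * z = 0"
  then show "pt (x, y, z) \<in> line_of (a, b, c)" unfolding line_of_def using assms by auto
qed

lemma pt_affine_in_line_of_iff [simp]:
  "pt (x, y, 1) \<in> line_of (a, b, c) \<longleftrightarrow> a * x + b * y + c = (0::'a::field)"
  using pt_in_line_of_iff[of x y 1 a b c] by simp

lemma pt_010_in_line_of_iff [simp]: "pt (0, 1, 0) \<in> line_of (a, b, c) \<longleftrightarrow> b = (0::'a::field)"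
  using pt_in_line_of_iff[of 0 1 0 a b c] by simp

lemma pt_100_in_line_of_iff [simp]: "pt (1, 0, 0) \<in> line_of (a, b, c) \<longleftrightarrow> a = (0::'a::field)"
  using pt_in_line_of_iff[of 1 0 0 a b c] by simp

lemma line_of_smul3:
  fixes w :: "'a::field \<times> 'a \<times> 'a"
  assumes "d \<noteq> 0"
  shows "line_of (smul3 d w) = line_of w"
proof -
  obtain a b c where w: "w = (a, b, c)" by (cases w)
  have "d * a * x + d * b * y + d * c * z = d * (a * x + b * y + c * z)" for x y z
    by (simp add: algebra_simps)
  then have "d * a * x + d * b * y + d * c * z = 0 \<longleftrightarrow> a * x + b * y + c * z = 0" for x y z
    using assms by simp
  then show ?thesis unfolding line_of_def w by simp
qed

lemma line_of_in_pg_lines: "w \<noteq> (0, 0, 0) \<Longrightarrow> line_of w \<in> pg_lines"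
  unfolding pg_lines_def by blast

lemma pg_linesE:
  assumes "L \<in> pg_lines"
  obtains a b c where "L = line_of (a, b, c)" "(a, b, c) \<noteq> (0, 0, (0::'a::field))"
  using assms unfolding pg_lines_def by auto

section \<open>The field with \<open>q\<^sup>2\<close> elements\<close>

locale quadratic_extension =
  fixes q :: nat and \<zeta> :: "'a::{field,finite}"
  assumes card: "CARD('a) = q ^ 2"
    and odd: "odd q"
    and primitive: "primitive_elem \<zeta>"
begin

lemma odd_card: "odd CARD('a)"
  using odd by (simp add: card)

lemma two_neq_0 [simp]: "(2::'a) \<noteq> 0"
  using two_neq_zero_if_odd_card[OF odd_card] .

lemma four_neq_0 [simp]: "(4::'a) \<noteq> 0"
proof -
  have "(4::'a) = 2 * 2" by simp
  then show ?thesis using two_neq_0 mult_eq_0_iff by metis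
qed

lemma neq_uminus_self:
  fixes c :: 'a
  shows "c \<noteq> 0 \<Longrightarrow> c \<noteq> - c"
  by (simp add: eq_neg_iff_add_eq_0 flip: mult_2)

lemma q_ge_3: "q \<ge> 3"
proof -
  have "q \<noteq> 1" using card_UNIV_field_ge_2[where 'a = 'a] by (intro notI) (simp add: card)
  with odd show ?thesis by presburger
qed

lemma card_minus_1_div_2: "(CARD('a) - 1) div 2 = (q - 1) * ((q + 1) div 2)"
proof -
  have "CARD('a) - 1 = (q - 1) * (q + 1)"
    using q_ge_3 by (simp add: card power2_eq_square algebra_simps)
  then show ?thesis using odd by (auto elim!: oddE simp: algebra_simps)
qed

lemma q_CHAR_power: "\<exists>m. q = CHAR('a) ^ m"
proof -
  have "prime CHAR('a)" by (simp add: finite_imp_CHAR_pos prime_CHAR_semidom)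
  moreover obtain n where "q ^ 2 = CHAR('a) ^ n" using card_UNIV_CHAR_power card by metis
  then have "q dvd CHAR('a) ^ n" by (metis dvd_triv_left power2_eq_square)
  ultimately show ?thesis using divides_primepow_nat by blast
qed

definition frob :: "'a \<Rightarrow> 'a" where
  "frob x = x ^ q"

lemma frob_add [simp]: "frob (x + y) = frob x + frob y"
proof -
  obtain m where "q = CHAR('a) ^ m" using q_CHAR_power by blast
  then show ?thesis
    unfolding frob_def by (simp add: freshmans_dream' finite_imp_CHAR_pos prime_CHAR_semidom)
qed

lemma frob_mult [simp]: "frob (x * y) = frob x * frob y"
  by (simp add: frob_def power_mult_distrib)

lemma frob_uminus [simp]: "frob (- x) = - frob x"
  using odd by (simp add: frob_def)

lemma frob_diff [simp]: "frob (x - y) = frob x - frob y"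
  by (metis frob_add frob_uminus diff_conv_add_uminus)

lemma frob_frob [simp]: "frob (frob x) = x"
  using power_card_UNIV_eq_self[of x] by (simp add: frob_def card power2_eq_square flip: power_mult)

lemma frob_0 [simp]: "frob 0 = 0"
  using q_ge_3 by (simp add: frob_def)

lemma frob_1 [simp]: "frob 1 = 1"
  by (simp add: frob_def)

lemma frob_power [simp]: "frob (x ^ n) = frob x ^ n"
  by (simp add: frob_def flip: power_mult) (simp add: mult.commute power_mult)

lemma frob_inverse [simp]: "frob (inverse x) = inverse (frob x)"
  by (simp add: frob_def power_inverse)

lemma frob_divide [simp]: "frob (x / y) = frob x / frob y"
  by (simp add: divide_inverse)

lemma frob_of_nat [simp]: "frob (of_nat n) = of_nat n"
  by (induction n) auto

lemma frob_numeral [simp]: "frob (numeral n) = numeral n"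
  by (metis frob_of_nat of_nat_numeral)

lemma frob_eq_0_iff [simp]: "frob x = 0 \<longleftrightarrow> x = 0"
  by (metis frob_0 frob_frob)

definition fnorm :: "'a \<Rightarrow> 'a" where
  "fnorm x = x * frob x"

lemma power_q_plus_1: "x ^ (q + 1) = fnorm x"
  by (simp add: fnorm_def frob_def)

lemma frob_fnorm [simp]: "frob (fnorm x) = fnorm x"
  by (simp add: fnorm_def mult.commute)

lemma fnorm_0 [simp]: "fnorm 0 = 0"
  by (simp add: fnorm_def)

lemma fnorm_uminus [simp]: "fnorm (- x) = fnorm x"
  by (simp add: fnorm_def)

lemma fnorm_eq_0_iff [simp]: "fnorm x = 0 \<longleftrightarrow> x = 0"
  by (simp add: fnorm_def)

lemma fnorm_of_square:
  assumes "c ^ 2 = w"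
  shows "w ^ ((q + 1) div 2) = fnorm c"
proof -
  define h where "h = (q + 1) div 2"
  have "q + 1 = 2 * h" using odd unfolding h_def by simp
  then have "w ^ h = c ^ (q + 1)"
    unfolding assms[symmetric] by (simp only: power_mult)
  then show ?thesis unfolding h_def power_q_plus_1 .
qed

lemma subfield_q_iff: "r \<in> subfield_q q \<longleftrightarrow> frob r = r"
  unfolding subfield_q_def frob_def by simp

lemma power_q_minus_1_mult: "x ^ (q - 1) * x = frob x"
  using q_ge_3 unfolding frob_def by (simp flip: power_Suc2)

lemma frob_fixed_power_q_minus_1:
  assumes "frob x = x" "x \<noteq> 0"
  shows "x ^ (q - 1) = 1"
  using power_q_minus_1_mult[of x] assms by simp

lemma card_frob_fixed_le: "card {x. frob x = x} \<le> q"
  using card_roots_power_eq_poly_le[of "[:0, 1:]" q] q_ge_3 by (simp add: frob_def)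

lemma card_fnorm_eq_le: "card {z. fnorm z = w} \<le> q + 1"
  using card_roots_power_eq_poly_le[of "[:w:]" "q + 1"] unfolding power_q_plus_1 by simp

text \<open>The norm maps the \<open>q\<^sup>2 - 1\<close> nonzero elements into the \<open>q - 1\<close> nonzero elements
  of \<open>F\<^sub>q\<close> with fibres of size at most \<open>q + 1\<close>, so every fibre has exactly that size.\<close>

lemma card_fnorm_eq:
  assumes w: "w \<noteq> 0" "frob w = w"
  shows "card {z. fnorm z = w} = q + 1"
proof -
  define S where "S = {x. frob x = x} - {0}"
  define fib where "fib s = card {z. fnorm z = s}" for s
  have "w \<in> S" using w unfolding S_def by simp
  have "card (UNIV - {0::'a}) = (\<Sum>s\<in>S. card {z \<in> UNIV - {0}. fnorm z = s})"
    by (rule card_eq_sum_card_fibres) (auto simp: S_def)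
  also have "\<dots> = (\<Sum>s\<in>S. fib s)"
    unfolding fib_def S_def by (intro sum.cong refl arg_cong[where f = card]) auto
  also have "\<dots> = fib w + (\<Sum>s\<in>S - {w}. fib s)"
    using \<open>w \<in> S\<close> by (simp add: sum.remove)
  finally have total: "q * q - 1 = fib w + (\<Sum>s\<in>S - {w}. fib s)"
    by (simp add: card card_Diff_singleton power2_eq_square)
  have "(\<Sum>s\<in>S - {w}. fib s) \<le> (card S - 1) * (q + 1)"
    using sum_mono[of "S - {w}" fib "\<lambda>_. q + 1"] card_fnorm_eq_le \<open>w \<in> S\<close>
    by (simp add: fib_def card_Diff_singleton)
  also have "\<dots> \<le> (q - 2) * (q + 1)"
  proof (rule mult_le_mono1)
    show "card S - 1 \<le> q - 2"
      using card_frob_fixed_le unfolding S_def by (simp add: card_Diff_singleton)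
  qed
  finally have "q * q - 1 \<le> fib w + (q - 2) * (q + 1)"
    using total by linarith
  moreover obtain r where "q = r + 2" using q_ge_3 by (intro that[of "q - 2"]) simp
  ultimately have "q + 1 \<le> fib w" by (simp add: algebra_simps)
  then show ?thesis using card_fnorm_eq_le[of w] unfolding fib_def by simp
qed

lemma is_square_iff_power:
  fixes x :: 'a
  assumes "x \<noteq> 0"
  shows "is_square x \<longleftrightarrow> x ^ ((q - 1) * ((q + 1) div 2)) = 1"
  using is_square_iff_power_half[OF odd_card primitive assms] unfolding card_minus_1_div_2 .

lemma frob_fixed_nonsquare_sqrt:
  assumes d: "frob d = d" and nsq: "\<not> (\<exists>y. frob y = y \<and> y ^ 2 = d)"
  obtains s where "s ^ 2 = d" "frob s = - s"
proof -
  have "d \<noteq> 0" using nsq by (intro notI) force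
  then have "is_square d"
    using frob_fixed_power_q_minus_1[OF d] by (simp add: is_square_iff_power power_mult)
  then obtain s where s: "s ^ 2 = d" unfolding is_square_def by blast
  then have "frob s ^ 2 = s ^ 2" using d by (metis frob_power)
  then have "frob s = s \<or> frob s = - s" by (simp add: power2_eq_iff)
  then show ?thesis using that s nsq by blast
qed

lemma frob_fixed_nonsquare_power:
  assumes "frob d = d" "\<not> (\<exists>y. frob y = y \<and> y ^ 2 = d)"
  shows "d ^ ((q + 1) div 2) = - d"
proof -
  obtain s where s: "s ^ 2 = d" "frob s = - s" using frob_fixed_nonsquare_sqrt[OF assms] .
  have "d ^ ((q + 1) div 2) = s * frob s" using fnorm_of_square[OF s(1)] by (simp add: fnorm_def)
  then show ?thesis using s by (simp add: power2_eq_square)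
qed

definition eps :: 'a where
  "eps = \<zeta> ^ ((q + 1) div 2)"

lemma eps_power_q_minus_1: "eps ^ (q - 1) = -1"
  using primitive_elem_power_half[OF odd_card primitive, unfolded card_minus_1_div_2]
  by (simp add: eps_def mult.commute flip: power_mult)

lemma eps_neq_0 [simp]: "eps \<noteq> 0"
  using eps_power_q_minus_1 q_ge_3 by (intro notI) (simp add: zero_power)

lemma frob_eps [simp]: "frob eps = - eps"
proof -
  have "eps ^ (q - 1) * eps = - eps" using eps_power_q_minus_1 by simp
  then show ?thesis by (simp only: power_q_minus_1_mult)
qed

end

section \<open>The pedal of \<open>R\<^sub>1\<close>\<close>

locale unital_pedal = quadratic_extension +
  fixes \<alpha> \<beta> :: 'a
  assumes \<alpha>_neq_0: "\<alpha> \<noteq> 0"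
    and disc_nonsquare: "nonsquare_in_Fq q ((\<beta> ^ q - \<beta>) ^ 2 + 4 * \<alpha> ^ (q + 1))"
begin

abbreviation unital :: "('a \<times> 'a \<times> 'a) set set" where
  "unital \<equiv> unital_ab q \<alpha> \<beta>"

definition \<delta> :: 'a where
  "\<delta> = frob \<beta> - \<beta>"

definition disc :: 'a where
  "disc = \<delta> ^ 2 + 4 * \<alpha> * frob \<alpha>"

text \<open>The affine points of the unital are \<open>(x, ufun x + r)\<close> with \<open>r \<in> F\<^sub>q\<close>. For \<open>c \<in> contacts\<close>
  the line through \<open>R\<^sub>1 = (0, eps, 1)\<close> with slope \<open>slope c\<close> is tangent at \<open>contact c\<close>.\<close>

definition ufun :: "'a \<Rightarrow> 'a" where
  "ufun x = \<alpha> * x ^ 2 + \<beta> * fnorm x"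

definition qf :: "'a \<Rightarrow> 'a" where
  "qf c = frob \<alpha> * frob c ^ 2 - \<alpha> * c ^ 2 + \<delta> * fnorm c"

definition slope :: "'a \<Rightarrow> 'a" where
  "slope c = 2 * \<alpha> * c - \<delta> * frob c"

definition height :: "'a \<Rightarrow> 'a" where
  "height c = 2 * \<alpha> * c ^ 2 - \<delta> * fnorm c"

definition contact :: "'a \<Rightarrow> ('a \<times> 'a \<times> 'a) set" where
  "contact c = pt (c, height c + eps, 1)"

definition contacts :: "'a set" where
  "contacts = {c. qf c = 2 * eps}"

lemma frob_\<delta> [simp]: "frob \<delta> = - \<delta>"
  unfolding \<delta>_def by simp

lemma frob_disc [simp]: "frob disc = disc"
  unfolding disc_def by (simp add: mult.commute mult.left_commute)

lemma disc_not_Fq_square: "\<not> (\<exists>y. frob y = y \<and> y ^ 2 = disc)"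
proof -
  have "(\<beta> ^ q - \<beta>) ^ 2 + 4 * \<alpha> ^ (q + 1) = disc"
    unfolding disc_def \<delta>_def by (simp add: power_q_plus_1 fnorm_def frob_def mult.assoc)
  then show ?thesis
    using disc_nonsquare unfolding nonsquare_in_Fq_def by (auto simp: subfield_q_iff)
qed

lemma disc_neq_0 [simp]: "disc \<noteq> 0"
  using disc_not_Fq_square by (metis frob_0 zero_power2)

lemma disc_power_half: "disc ^ ((q + 1) div 2) = - disc"
  using frob_fixed_nonsquare_power[OF frob_disc disc_not_Fq_square] .

lemma qf_uminus [simp]: "qf (- c) = qf c"
  unfolding qf_def by simp

lemma qf_0 [simp]: "qf 0 = 0"
  unfolding qf_def by simp

text \<open>\<open>qf\<close> is anisotropic: writing \<open>frob v = t v\<close>, a zero \<open>v \<noteq> 0\<close> would make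
  \<open>2 frob \<alpha> t + \<delta>\<close> a square root of \<open>disc\<close> fixed by \<open>frob\<close>.\<close>

lemma qf_eq_0_iff [simp]: "qf v = 0 \<longleftrightarrow> v = 0"
proof
  assume qv: "qf v = 0"
  show "v = 0"
  proof (rule ccontr)
    assume v: "v \<noteq> 0"
    define t where "t = frob v / v"
    have t0: "t \<noteq> 0" and ft: "frob t = inverse t"
      unfolding t_def using v by (simp_all add: divide_inverse)
    have "v ^ 2 * (frob \<alpha> * t ^ 2 + \<delta> * t - \<alpha>) = qf v"
      unfolding qf_def fnorm_def t_def using v by (simp add: field_simps power2_eq_square)
    then have eq: "frob \<alpha> * t ^ 2 + \<delta> * t - \<alpha> = 0" using qv v by simp
    define u where "u = 2 * frob \<alpha> * t + \<delta>"
    have "u ^ 2 = 4 * frob \<alpha> * (frob \<alpha> * t ^ 2 + \<delta> * t) + \<delta> ^ 2"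
      unfolding u_def by (simp add: algebra_simps power2_eq_square)
    also have "frob \<alpha> * t ^ 2 + \<delta> * t = \<alpha>" using eq by (simp add: algebra_simps)
    finally have u2: "u ^ 2 = disc" unfolding disc_def by (simp add: algebra_simps)
    have "frob u * t = 2 * \<alpha> - \<delta> * t"
      unfolding u_def using ft t0 by (simp add: algebra_simps)
    also have "\<dots> = u * t"
      unfolding u_def using eq by algebra
    finally have "frob u = u" using t0 by simp
    then show False using disc_not_Fq_square u2 by blast
  qed
qed simp

lemma slope_eq_0_iff: "slope c = 0 \<longleftrightarrow> c = 0"
proof
  assume "slope c = 0"
  then have e1: "2 * \<alpha> * c = \<delta> * frob c" unfolding slope_def by simp
  then have "frob (2 * \<alpha> * c) = frob (\<delta> * frob c)" by simp
  then have e2: "2 * frob \<alpha> * frob c = - \<delta> * c" by simp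
  have "(2 * \<alpha> * c) * (2 * frob \<alpha> * frob c) = (\<delta> * frob c) * (- \<delta> * c)"
    using e1 e2 by simp
  then have "disc * fnorm c = 0" unfolding disc_def fnorm_def by (simp add: algebra_simps power2_eq_square)
  then show "c = 0" by simp
qed (simp add: slope_def)

lemma bij_slope: "bij slope"
proof -
  have "inj slope"
  proof (rule injI)
    fix a b assume "slope a = slope b"
    then have "slope (a - b) = 0" unfolding slope_def by (simp add: algebra_simps)
    then show "a = b" by (simp add: slope_eq_0_iff)
  qed
  then show ?thesis using finite_UNIV_inj_surj[of slope] by (simp add: bij_def)
qed

lemma slope_mult_self: "slope c * c = height c"
  unfolding slope_def height_def fnorm_def by (simp add: algebra_simps power2_eq_square)

lemma pt_in_unital_iff: "pt (x, y, 1) \<in> unital \<longleftrightarrow> frob (y - ufun x) = y - ufun x"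
proof
  assume "pt (x, y, 1) \<in> unital"
  then obtain x' r where "pt (x, y, 1) = pt (x', \<alpha> * x' ^ 2 + \<beta> * x' ^ (q + 1) + r, 1)" "frob r = r"
    unfolding unital_ab_def subfield_q_iff by auto
  then show "frob (y - ufun x) = y - ufun x" unfolding ufun_def power_q_plus_1 by auto
next
  assume "frob (y - ufun x) = y - ufun x"
  moreover have "pt (x, y, 1) = pt (x, \<alpha> * x ^ 2 + \<beta> * x ^ (q + 1) + (y - ufun x), 1)"
    unfolding ufun_def power_q_plus_1 by simp
  ultimately show "pt (x, y, 1) \<in> unital" unfolding unital_ab_def subfield_q_iff by blast
qed

lemma pt_010_in_unital: "pt (0, 1, 0) \<in> unital"
  unfolding unital_ab_def by simp

lemma unital_cases:
  assumes "P \<in> unital"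
  obtains "P = pt (0, 1, 0)" | x y where "P = pt (x, y, 1)" "frob (y - ufun x) = y - ufun x"
proof -
  from assms consider "P = pt (0, 1, 0)"
    | x r where "P = pt (x, \<alpha> * x ^ 2 + \<beta> * x ^ (q + 1) + r, 1)" "frob r = r"
    unfolding unital_ab_def subfield_q_iff by auto
  then show ?thesis
  proof cases
    case (2 x r)
    then show ?thesis using that(2)[of x "\<alpha> * x ^ 2 + \<beta> * x ^ (q + 1) + r"]
      unfolding ufun_def power_q_plus_1 by simp
  qed (use that(1) in simp)
qed

lemma pt_on_line_in_unital_iff:
  "pt (x, slope c * x + eps, 1) \<in> unital \<longleftrightarrow> qf (x - c) = qf c - 2 * eps"
proof -
  let ?H = "slope c * x + eps - ufun x"
  have H: "frob ?H - ?H = - (qf (x - c) - qf c + 2 * eps)"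
    unfolding slope_def qf_def ufun_def fnorm_def \<delta>_def by (simp add: algebra_simps power2_eq_square)
  have "pt (x, slope c * x + eps, 1) \<in> unital \<longleftrightarrow> frob ?H - ?H = 0"
    unfolding pt_in_unital_iff by (rule right_minus_eq[symmetric])
  also have "\<dots> \<longleftrightarrow> qf (x - c) = qf c - 2 * eps"
    unfolding H by (simp only: neg_equal_0_iff_equal diff_add_eq eq_diff_eq right_minus_eq)
  finally show ?thesis .
qed

lemma lines_through_R1:
  assumes "L \<in> pg_lines" "pt (0, eps, 1) \<in> L"
  shows "L = line_of (1, 0, 0) \<or> (\<exists>c. L = line_of (slope c, -1, eps))"
proof -
  obtain a b d where L: "L = line_of (a, b, d)" "(a, b, d) \<noteq> (0, 0, 0)"
    using assms(1) by (rule pg_linesE)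
  have d: "d = - b * eps" using assms(2) unfolding L by (simp add: eq_neg_iff_add_eq_0 add.commute)
  show ?thesis
  proof (cases "b = 0")
    case True
    then have "L = line_of (smul3 a (1, 0, 0))" using L d by simp
    then show ?thesis using L d True line_of_smul3[of a "(1, 0, 0)"] by auto
  next
    case False
    obtain c where c: "slope c = - a / b" using bij_slope by (metis bij_pointE)
    have "(a, b, d) = smul3 (- b) (slope c, -1, eps)" using False c d by simp
    then have "L = line_of (slope c, -1, eps)"
      using L(1) False line_of_smul3[of "- b" "(slope c, -1, eps)"] by simp
    then show ?thesis by blast
  qed
qed

lemma line_through_R1_inter_unital:
  "line_of (slope c, -1, eps) \<inter> unital
     = (\<lambda>x. pt (x, slope c * x + eps, 1)) ` {x. qf (x - c) = qf c - 2 * eps}"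
proof (intro set_eqI iffI)
  fix P assume P: "P \<in> line_of (slope c, -1, eps) \<inter> unital"
  then have "P \<in> unital" by simp
  then show "P \<in> (\<lambda>x. pt (x, slope c * x + eps, 1)) ` {x. qf (x - c) = qf c - 2 * eps}"
  proof (cases rule: unital_cases)
    case (2 x y)
    then have "slope c * x - y + eps = 0" using P by simp
    then have "y = slope c * x + eps" by algebra
    then show ?thesis using 2 pt_in_unital_iff pt_on_line_in_unital_iff by auto
  qed (use P in simp)
qed (auto simp: pt_on_line_in_unital_iff)

lemma pedal_R1: "pedal unital (pt (0, eps, 1)) = contact ` contacts"
proof (intro equalityI subsetI)
  fix Q assume "Q \<in> pedal unital (pt (0, eps, 1))"
  then obtain L where L: "L \<in> pg_lines" "pt (0, eps, 1) \<in> L" and LU: "L \<inter> unital = {Q}"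
    unfolding pedal_def tangent_line_def by auto
  from lines_through_R1[OF L] show "Q \<in> contact ` contacts"
  proof (elim disjE exE)
    assume "L = line_of (1, 0, 0)"
    then have "{pt (0, 1, 0), pt (0, 0, 1)} \<subseteq> L \<inter> unital"
      using pt_010_in_unital by (simp add: pt_in_unital_iff ufun_def)
    then show ?thesis using LU by (metis insert_subset pt_affine_neq_infinite(2) singletonD)
  next
    fix c assume Lc: "L = line_of (slope c, -1, eps)"
    define X where "X = {x. qf (x - c) = qf c - 2 * eps}"
    have img: "(\<lambda>x. pt (x, slope c * x + eps, 1)) ` X = {Q}"
      using LU line_through_R1_inter_unital unfolding Lc X_def by simp
    then obtain x where x: "x \<in> X" "Q = pt (x, slope c * x + eps, 1)" by blast
    have "2 * c - x \<in> X" using x(1) qf_uminus[of "x - c"] unfolding X_def by (simp add: algebra_simps)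
    then have "pt (2 * c - x, slope c * (2 * c - x) + eps, 1) = Q" using img by blast
    then have "x = c" using x(2) by (simp add: algebra_simps)
    then show ?thesis using x unfolding X_def contacts_def contact_def
      by (auto simp: slope_mult_self)
  qed
next
  fix Q assume "Q \<in> contact ` contacts"
  then obtain c where c: "qf c = 2 * eps" and Q: "Q = contact c"
    unfolding contacts_def by blast
  define L where "L = line_of (slope c, -1, eps)"
  have "L \<inter> unital = {Q}"
    using line_through_R1_inter_unital[of c] c unfolding L_def Q contact_def
    by (auto simp: slope_mult_self)
  moreover have "L \<in> pg_lines" unfolding L_def by (simp add: line_of_in_pg_lines)
  moreover have "pt (0, eps, 1) \<in> L" unfolding L_def by simp
  ultimately show "Q \<in> pedal unital (pt (0, eps, 1))"
    unfolding pedal_def tangent_line_def by auto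
qed

text \<open>With \<open>\<mu> = \<sigma> - \<delta>\<close> for a square root \<open>\<sigma>\<close> of \<open>disc\<close> (so that \<open>\<mu>\<^sup>2 + 2 \<delta> \<mu> = 4 \<alpha> frob \<alpha>\<close>), \<open>qf\<close> is a
  multiple of the norm of the \<open>F\<^sub>q\<close>-linear map \<open>c \<mapsto> frob c - \<mu> c / (2 frob \<alpha>)\<close>.\<close>

lemma qf_eq_fnorm:
  assumes \<mu>0: "\<mu> \<noteq> 0" and f\<mu>: "frob \<mu> = - \<mu>" and \<mu>2: "\<mu> ^ 2 + 2 * \<delta> * \<mu> = 4 * \<alpha> * frob \<alpha>"
  shows "qf c = 2 * \<alpha> * frob \<alpha> / \<mu> * fnorm (frob c - \<mu> / (2 * frob \<alpha>) * c)"
proof -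
  have "2 * \<alpha> * frob \<alpha> / \<mu> * fnorm (frob c - \<mu> / (2 * frob \<alpha>) * c)
      = 2 * \<alpha> * frob \<alpha> / \<mu> * ((frob c - \<mu> / (2 * frob \<alpha>) * c) * (c + \<mu> / (2 * \<alpha>) * frob c))"
    unfolding fnorm_def using f\<mu> by simp
  also have "\<dots> = frob \<alpha> * frob c ^ 2 - \<alpha> * c ^ 2
      + (4 * \<alpha> * frob \<alpha> - \<mu> ^ 2) / (2 * \<mu>) * c * frob c"
    using \<alpha>_neq_0 \<mu>0 by (simp add: field_simps power2_eq_square)
  also have "(4 * \<alpha> * frob \<alpha> - \<mu> ^ 2) / (2 * \<mu>) = \<delta>"
    using \<mu>0 unfolding \<mu>2[symmetric] by (simp add: field_simps power2_eq_square)
  finally show ?thesis unfolding qf_def fnorm_def by (simp add: mult.assoc)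
qed

lemma frob_eq_mult_imp_eq_0:
  assumes \<mu>0: "\<mu> \<noteq> 0" and f\<mu>: "frob \<mu> = - \<mu>" and \<mu>2: "\<mu> ^ 2 + 2 * \<delta> * \<mu> = 4 * \<alpha> * frob \<alpha>"
    and fc: "frob c = \<mu> / (2 * frob \<alpha>) * c"
  shows "c = 0"
proof -
  define t where "t = \<mu> / (2 * frob \<alpha>)"
  have fc': "frob c = t * c" using fc unfolding t_def .
  have "frob (frob c) = frob (t * c)" using fc' by (rule arg_cong)
  then have "c = frob t * frob c" by simp
  then have "c = frob t * t * c" unfolding fc' by (simp add: mult.assoc)
  then have "(1 - frob t * t) * c = 0" by (simp add: algebra_simps)
  moreover have "1 - frob t * t \<noteq> 0"
  proof
    assume "1 - frob t * t = 0"
    then have "4 * \<alpha> * frob \<alpha> + \<mu> ^ 2 = 0"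
      unfolding t_def using \<alpha>_neq_0 f\<mu> by (simp add: field_simps power2_eq_square)
    with \<mu>2 have "2 * (\<mu> * (\<mu> + \<delta>)) = 0" by algebra
    then have "\<mu> = - \<delta>" using \<mu>0 by (simp add: eq_neg_iff_add_eq_0)
    with \<mu>2 have "disc = 0" unfolding disc_def by algebra
    then show False by simp
  qed
  ultimately show "c = 0" by simp
qed

lemma card_contacts: "card contacts = q + 1"
proof -
  obtain \<sigma> where \<sigma>2: "\<sigma> ^ 2 = disc" and f\<sigma>: "frob \<sigma> = - \<sigma>"
    using frob_fixed_nonsquare_sqrt[OF frob_disc disc_not_Fq_square] .
  define \<mu> where "\<mu> = \<sigma> - \<delta>"
  have f\<mu>: "frob \<mu> = - \<mu>" unfolding \<mu>_def using f\<sigma> by simp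
  have \<mu>2: "\<mu> ^ 2 + 2 * \<delta> * \<mu> = 4 * \<alpha> * frob \<alpha>"
    using \<sigma>2 unfolding \<mu>_def disc_def by algebra
  have \<mu>0: "\<mu> \<noteq> 0" using \<mu>2 \<alpha>_neq_0 by auto
  define \<kappa> where "\<kappa> = 2 * \<alpha> * frob \<alpha> / \<mu>"
  define t where "t = \<mu> / (2 * frob \<alpha>)"
  define z where "z c = frob c - t * c" for c
  have "inj z"
  proof (rule injI)
    fix a b assume "z a = z b"
    then have "frob (a - b) = t * (a - b)" unfolding z_def by (simp add: algebra_simps)
    then have "a - b = 0" using frob_eq_mult_imp_eq_0[OF \<mu>0 f\<mu> \<mu>2] unfolding t_def by blast
    then show "a = b" by simp
  qed
  then have "bij z" using finite_UNIV_inj_surj[of z] by (simp add: bij_def)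
  have "\<kappa> \<noteq> 0" unfolding \<kappa>_def using \<alpha>_neq_0 \<mu>0 by simp
  then have "contacts = z -` {w. fnorm w = 2 * eps / \<kappa>}"
    unfolding contacts_def qf_eq_fnorm[OF \<mu>0 f\<mu> \<mu>2] \<kappa>_def[symmetric] t_def[symmetric]
      z_def[symmetric]
    by (auto simp: field_simps)
  then have "card contacts = card (z -` {w. fnorm w = 2 * eps / \<kappa>})" by simp
  also have "\<dots> = card {w. fnorm w = 2 * eps / \<kappa>}"
    using \<open>bij z\<close> by (intro card_vimage_inj) (auto simp: bij_def)
  also have "\<dots> = q + 1"
  proof (rule card_fnorm_eq)
    show "2 * eps / \<kappa> \<noteq> 0" using \<open>\<kappa> \<noteq> 0\<close> by simp
    show "frob (2 * eps / \<kappa>) = 2 * eps / \<kappa>" unfolding \<kappa>_def using f\<mu> by simp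
  qed
  finally show ?thesis .
qed

subsection \<open>Fibres of the height\<close>

definition other_norm :: "'a \<Rightarrow> 'a \<Rightarrow> 'a" where
  "other_norm s n = \<delta> * (frob s - s) / disc - n"

lemma height_uminus [simp]: "height (- c) = height c"
  unfolding height_def by simp

lemma height_0 [simp]: "height 0 = 0"
  unfolding height_def by simp

text \<open>The quadratic for \<open>fnorm c\<close> is the norm of the equation \<open>2 \<alpha> c\<^sup>2 = s + \<delta> fnorm c\<close>.\<close>

lemma height_eqD:
  assumes "height c = s"
  shows "c ^ 2 = (s + \<delta> * fnorm c) / (2 * \<alpha>)"
    and "disc * fnorm c ^ 2 - \<delta> * (frob s - s) * fnorm c - s * frob s = 0"
proof -
  have e1: "2 * \<alpha> * c ^ 2 = s + \<delta> * fnorm c"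
    using assms unfolding height_def by (simp add: diff_eq_eq)
  then show "c ^ 2 = (s + \<delta> * fnorm c) / (2 * \<alpha>)"
    using \<alpha>_neq_0 by (simp add: field_simps)
  have "frob (2 * \<alpha> * c ^ 2) = frob (s + \<delta> * fnorm c)" using e1 by (rule arg_cong)
  then have e2: "2 * frob \<alpha> * frob c ^ 2 = frob s - \<delta> * fnorm c" by simp
  have "(2 * \<alpha> * c ^ 2) * (2 * frob \<alpha> * frob c ^ 2) = (s + \<delta> * fnorm c) * (frob s - \<delta> * fnorm c)"
    using e1 e2 by simp
  then show "disc * fnorm c ^ 2 - \<delta> * (frob s - s) * fnorm c - s * frob s = 0"
    unfolding disc_def fnorm_def by (simp add: algebra_simps power2_eq_square)
qed

lemma other_norm_roots:
  assumes "height c = s"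
  shows "disc * (fnorm c + other_norm s (fnorm c)) = \<delta> * (frob s - s)"
    and "disc * (fnorm c * other_norm s (fnorm c)) = - (s * frob s)"
  using height_eqD(2)[OF assms] unfolding other_norm_def
  by (simp_all add: field_simps power2_eq_square)

text \<open>If \<open>n\<^sub>1, n\<^sub>2\<close> are the two roots, the product of the corresponding candidates for \<open>c\<^sup>2\<close>
  raised to \<open>(q + 1)/2\<close> is \<open>\<chi>(\<alpha>) n\<^sub>1 n\<^sub>2\<close>, where \<open>\<chi>(\<alpha>) = \<alpha>\<^bsup>(q\<^sup>2 - 1)/2\<^esup>\<close> is
  the quadratic character of \<open>\<alpha>\<close>, because \<open>disc\<close> is a nonsquare in \<open>F\<^sub>q\<close>.\<close>

lemma square_candidates_power:
  assumes S: "disc * (n1 + n2) = \<delta> * (frob s - s)" and P: "disc * (n1 * n2) = - (s * frob s)"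
  shows "((s + \<delta> * n1) / (2 * \<alpha>) * ((s + \<delta> * n2) / (2 * \<alpha>))) ^ ((q + 1) div 2)
    = \<alpha> ^ ((q - 1) * ((q + 1) div 2)) * (n1 * n2)"
proof -
  define h where "h = (q + 1) div 2"
  have "disc * ((s + \<delta> * n1) * (s + \<delta> * n2))
      = disc * s ^ 2 + s * \<delta> * (disc * (n1 + n2)) + \<delta> ^ 2 * (disc * (n1 * n2))"
    by (simp add: algebra_simps power2_eq_square)
  also have "\<dots> = 4 * \<alpha> * frob \<alpha> * s ^ 2"
    unfolding S P by (simp add: disc_def algebra_simps power2_eq_square)
  finally have "disc * ((s + \<delta> * n1) * (s + \<delta> * n2)) = 4 * \<alpha> * frob \<alpha> * s ^ 2" .
  then have prod: "(s + \<delta> * n1) / (2 * \<alpha>) * ((s + \<delta> * n2) / (2 * \<alpha>))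
      = (frob \<alpha> / \<alpha>) * s ^ 2 * inverse disc"
    using \<alpha>_neq_0 by (simp add: field_simps power2_eq_square)
  have "((s + \<delta> * n1) / (2 * \<alpha>) * ((s + \<delta> * n2) / (2 * \<alpha>))) ^ h
      = (frob \<alpha> / \<alpha>) ^ h * (s ^ 2) ^ h * inverse (disc ^ h)"
    unfolding prod by (simp only: power_mult_distrib power_inverse)
  also have "(frob \<alpha> / \<alpha>) ^ h = \<alpha> ^ ((q - 1) * h)"
  proof -
    have "\<alpha> ^ (q - 1) * \<alpha> = frob \<alpha>" by (rule power_q_minus_1_mult)
    then have "frob \<alpha> / \<alpha> = \<alpha> ^ (q - 1)" using \<alpha>_neq_0 by (simp add: field_simps)
    then show ?thesis by (simp add: power_mult)
  qed
  also have "(s ^ 2) ^ h = s * frob s" unfolding h_def fnorm_of_square[OF refl] fnorm_def ..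
  also have "disc ^ h = - disc" unfolding h_def by (rule disc_power_half)
  also have "s * frob s = - (disc * (n1 * n2))" using P by simp
  also have "\<alpha> ^ ((q - 1) * h) * - (disc * (n1 * n2)) * inverse (- disc) = \<alpha> ^ ((q - 1) * h) * (n1 * n2)"
    by simp
  finally show ?thesis unfolding h_def .
qed

lemma height_fibre_two_norms_imp_square:
  assumes "height c1 = s" "height c2 = s" "fnorm c1 \<noteq> fnorm c2" "s \<noteq> 0"
  shows "is_square \<alpha>"
proof -
  note V = quadratic_two_roots[OF height_eqD(2)[OF assms(1)] height_eqD(2)[OF assms(2)] assms(3)]
  have "((s + \<delta> * fnorm c1) / (2 * \<alpha>) * ((s + \<delta> * fnorm c2) / (2 * \<alpha>))) ^ ((q + 1) div 2)
      = fnorm c1 * fnorm c2"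
    by (simp only: power_mult_distrib fnorm_of_square height_eqD(1)[OF assms(1), symmetric]
        height_eqD(1)[OF assms(2), symmetric])
  then have "\<alpha> ^ ((q - 1) * ((q + 1) div 2)) * (fnorm c1 * fnorm c2) = fnorm c1 * fnorm c2"
    using square_candidates_power[OF V] by simp
  moreover have "fnorm c1 * fnorm c2 \<noteq> 0" using V(2) assms(4) by auto
  ultimately show ?thesis using is_square_iff_power[OF \<alpha>_neq_0] by simp
qed

lemma height_fibre_other_norm:
  assumes sq: "is_square \<alpha>" and c1: "height c1 = s" and s0: "s \<noteq> 0"
  obtains c2 where "height c2 = s" "fnorm c2 = other_norm s (fnorm c1)"
proof -
  define n2 where "n2 = other_norm s (fnorm c1)"
  define w1 where "w1 = (s + \<delta> * fnorm c1) / (2 * \<alpha>)"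
  define w2 where "w2 = (s + \<delta> * n2) / (2 * \<alpha>)"
  note R = other_norm_roots[OF c1, folded n2_def]
  have "(w1 * w2) ^ ((q + 1) div 2) = fnorm c1 * n2"
    using square_candidates_power[OF R] sq is_square_iff_power[OF \<alpha>_neq_0] unfolding w1_def w2_def by simp
  moreover have "w1 ^ ((q + 1) div 2) = fnorm c1"
    unfolding w1_def using fnorm_of_square[OF height_eqD(1)[OF c1]] .
  moreover have "c1 \<noteq> 0" using c1 s0 by auto
  ultimately have w2h: "w2 ^ ((q + 1) div 2) = n2" by (simp add: power_mult_distrib)
  have n20: "n2 \<noteq> 0" using R(2) s0 by auto
  have "frob n2 = n2" unfolding n2_def other_norm_def by (simp add: field_simps)
  have "w2 ^ ((q - 1) * ((q + 1) div 2)) = (w2 ^ ((q + 1) div 2)) ^ (q - 1)"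
    by (metis mult.commute power_mult)
  also have "\<dots> = 1" using w2h frob_fixed_power_q_minus_1[OF \<open>frob n2 = n2\<close> n20] by simp
  finally have "w2 ^ ((q - 1) * ((q + 1) div 2)) = 1" .
  moreover have "w2 \<noteq> 0"
  proof
    assume "w2 = 0"
    moreover have "(q + 1) div 2 > 0" using q_ge_3 by simp
    ultimately show False using w2h n20 by (simp add: zero_power)
  qed
  ultimately have "is_square w2" using is_square_iff_power by blast
  then obtain c2 where c2: "c2 ^ 2 = w2" unfolding is_square_def by blast
  have "fnorm c2 = n2" using fnorm_of_square[OF c2] w2h by simp
  moreover have "height c2 = s"
    using c2 \<open>fnorm c2 = n2\<close> \<alpha>_neq_0 unfolding w2_def height_def by (simp add: field_simps)
  ultimately show ?thesis using that n2_def by blast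
qed

lemma height_fibre_same_norm:
  assumes "height c = height c'" "fnorm c = fnorm c'"
  shows "c = c' \<or> c = - c'"
proof -
  have "c ^ 2 = c' ^ 2" using height_eqD(1)[OF assms(1)] height_eqD(1)[OF refl, of c'] assms(2) by simp
  then show ?thesis by (simp add: power2_eq_iff)
qed

lemma height_fibre_norm_cases:
  assumes "height c = s" "height c1 = s"
  shows "fnorm c = fnorm c1 \<or> fnorm c = other_norm s (fnorm c1)"
proof (cases "fnorm c = fnorm c1")
  case False
  have "disc * (fnorm c + fnorm c1) = \<delta> * (frob s - s)"
    using quadratic_two_roots(1)[OF height_eqD(2)[OF assms(1)] height_eqD(2)[OF assms(2)] False] .
  then show ?thesis unfolding other_norm_def by (simp add: field_simps)
qed simp

lemma card_height_fibre_pair: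
  assumes c1: "height c1 = s" and s0: "s \<noteq> 0"
    and single: "\<not> is_square \<alpha> \<or> other_norm s (fnorm c1) = fnorm c1"
  shows "card {c. height c = s} = 2"
proof -
  have "{c. height c = s} = {c1, - c1}"
  proof (intro equalityI subsetI)
    fix c assume "c \<in> {c. height c = s}"
    then have c: "height c = s" by simp
    have "fnorm c = fnorm c1"
      using height_fibre_norm_cases[OF c c1] height_fibre_two_norms_imp_square[OF c c1 _ s0] single
      by auto
    then show "c \<in> {c1, - c1}" using height_fibre_same_norm[of c c1] c c1 by auto
  qed (use c1 in auto)
  moreover have "c1 \<noteq> 0" using c1 s0 by auto
  ultimately show ?thesis using neq_uminus_self[of c1] by simp
qed

lemma card_height_fibre_quad:
  assumes sq: "is_square \<alpha>" and c1: "height c1 = s" and s0: "s \<noteq> 0"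
    and two: "other_norm s (fnorm c1) \<noteq> fnorm c1"
  shows "card {c. height c = s} = 4"
proof -
  obtain c2 where c2: "height c2 = s" "fnorm c2 = other_norm s (fnorm c1)"
    using height_fibre_other_norm[OF sq c1 s0] .
  have "{c. height c = s} = {c1, - c1, c2, - c2}"
  proof (intro equalityI subsetI)
    fix c assume "c \<in> {c. height c = s}"
    then have c: "height c = s" by simp
    from height_fibre_norm_cases[OF c c1] show "c \<in> {c1, - c1, c2, - c2}"
      using height_fibre_same_norm[of c c1] height_fibre_same_norm[of c c2] c c1 c2 by auto
  qed (use c1 c2 in auto)
  moreover have "c1 \<noteq> 0" "c2 \<noteq> 0" using c1 c2(1) s0 by auto
  moreover have "c1 \<noteq> c2" "c1 \<noteq> - c2" "- c1 \<noteq> c2" "- c1 \<noteq> - c2"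
    using two c2(2) by (metis fnorm_uminus)+
  ultimately show ?thesis using neq_uminus_self[of c1] neq_uminus_self[of c2] by simp
qed

text \<open>A fibre of size two in the square case forces the two roots of the norm quadratic to
  coincide, that is, its discriminant vanishes.\<close>

lemma card_height_fibre:
  assumes s0: "s \<noteq> 0"
  shows "\<not> is_square \<alpha> \<Longrightarrow> card {c. height c = s} \<in> {0, 2}"
    and "is_square \<alpha> \<Longrightarrow> card {c. height c = s} \<in> {0, 2, 4}"
    and "is_square \<alpha> \<Longrightarrow> card {c. height c = s} = 2
      \<Longrightarrow> 4 * disc * (s * frob s) = - ((\<delta> * (frob s - s)) ^ 2)"
proof -
  consider "{c. height c = s} = {}" | c1 where "height c1 = s" by blast
  note cases = this
  show "\<not> is_square \<alpha> \<Longrightarrow> card {c. height c = s} \<in> {0, 2}"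
    by (cases rule: cases) (auto simp: card_height_fibre_pair s0)
  show "is_square \<alpha> \<Longrightarrow> card {c. height c = s} \<in> {0, 2, 4}"
  proof (cases rule: cases)
    case (2 c1)
    then show "is_square \<alpha> \<Longrightarrow> card {c. height c = s} \<in> {0, 2, 4}"
      using card_height_fibre_pair[OF 2 s0] card_height_fibre_quad[OF _ 2 s0]
      by (cases "other_norm s (fnorm c1) = fnorm c1") auto
  qed simp
  assume sq: "is_square \<alpha>" and two: "card {c. height c = s} = 2"
  then obtain c1 where c1: "height c1 = s" by (cases rule: cases) auto
  then have "other_norm s (fnorm c1) = fnorm c1"
    using card_height_fibre_quad[OF sq c1 s0] two by auto
  then have "2 * disc * fnorm c1 = \<delta> * (frob s - s)"
    unfolding other_norm_def by (simp add: field_simps)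
  with height_eqD(2)[OF c1] show "4 * disc * (s * frob s) = - ((\<delta> * (frob s - s)) ^ 2)"
    by algebra
qed

subsection \<open>Lines meeting the pedal\<close>

lemma inj_contact: "inj contact"
  unfolding contact_def by (rule injI) simp

lemma contact_in_line_of_iff:
  "contact c \<in> line_of (a, b, d) \<longleftrightarrow> a * c + b * (height c + eps) + d = 0"
  unfolding contact_def by simp

lemma frob_height_eps_diff: "frob (height c + eps) - (height c + eps) = 2 * qf c - 2 * eps"
  unfolding height_def qf_def fnorm_def by (simp add: algebra_simps power2_eq_square)

lemma qf_add_Fq_multiple:
  assumes "frob l = l"
  shows "qf (x + l * u) = qf x + l * (qf (x + u) - qf x - qf u) + l ^ 2 * qf u"
  unfolding qf_def fnorm_def using assms by (simp add: algebra_simps power2_eq_square)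

text \<open>Two contact points \<open>c\<^sub>1 \<noteq> c\<close> on a line \<open>y = m x + k\<close> differ by an \<open>F\<^sub>q\<close>-multiple \<open>l / m\<close>,
  and \<open>qf c = qf c\<^sub>1\<close> is then a linear equation for \<open>l \<noteq> 0\<close>.\<close>

lemma contacts_on_line_eq:
  assumes m0: "m \<noteq> 0"
    and c: "c \<in> contacts" "height c + eps = m * c + k"
    and c1: "c1 \<in> contacts" "height c1 + eps = m * c1 + k"
    and "c \<noteq> c1"
  shows "c = c1 - (qf (c1 + inverse m) - qf c1 - qf (inverse m)) / (m * qf (inverse m))"
proof -
  define u where "u = inverse m"
  define B where "B = qf (c1 + u) - qf c1 - qf u"
  define l where "l = m * (c - c1)"
  have qf2: "qf c = 2 * eps" "qf c1 = 2 * eps" using c(1) c1(1) unfolding contacts_def by simp_all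
  have "frob (height x + eps) - (height x + eps) = 2 * eps" if "qf x = 2 * eps" for x
    using frob_height_eps_diff[of x] that by simp
  then have "frob (m * c + k) - (m * c + k) = frob (m * c1 + k) - (m * c1 + k)"
    using qf2 c(2) c1(2) by metis
  then have fl: "frob l = l" unfolding l_def by (simp add: algebra_simps)
  have cl: "c = c1 + l * u" unfolding l_def u_def using m0 by (simp add: field_simps)
  have "l * (B + l * qf u) = 0"
    using qf_add_Fq_multiple[OF fl, of c1 u] qf2 unfolding cl[symmetric] B_def
    by (simp add: algebra_simps power2_eq_square)
  moreover have "l \<noteq> 0" unfolding l_def using m0 \<open>c \<noteq> c1\<close> by simp
  ultimately have "l * qf u = - B" by (simp add: eq_neg_iff_add_eq_0 add.commute)
  moreover have "qf u \<noteq> 0" unfolding u_def using m0 by simp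
  ultimately have "l = - B / qf u" by (simp add: field_simps)
  with cl show ?thesis unfolding B_def u_def using m0 by (simp add: field_simps)
qed

lemma card_contacts_on_line_le_2:
  assumes a: "a \<noteq> 0"
  shows "card {c \<in> contacts. a * c + b * (height c + eps) + d = 0} \<le> 2"
proof -
  define T where "T = {c \<in> contacts. a * c + b * (height c + eps) + d = 0}"
  have "\<exists>c1 c2. T \<subseteq> {c1, c2}"
  proof (cases "b = 0")
    case True
    then have "T \<subseteq> {- d / a}"
      unfolding T_def using a by (auto simp: field_simps eq_neg_iff_add_eq_0 add.commute)
    then show ?thesis by blast
  next
    case False
    define m where "m = - a / b"
    have line: "height c + eps = m * c + - d / b" if "c \<in> T" for c
    proof -
      have "a * c + b * (height c + eps) + d = 0" using that unfolding T_def by simp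
      then show ?thesis unfolding m_def using False by (simp add: field_simps) algebra
    qed
    have "m \<noteq> 0" unfolding m_def using a False by simp
    show ?thesis
    proof (cases "T = {}")
      case False
      then obtain c1 where c1: "c1 \<in> T" by blast
      have "T \<subseteq> {c1, c1 - (qf (c1 + inverse m) - qf c1 - qf (inverse m)) / (m * qf (inverse m))}"
        using contacts_on_line_eq[OF \<open>m \<noteq> 0\<close> _ line _ line[OF c1]] c1 unfolding T_def by blast
      then show ?thesis by blast
    qed auto
  qed
  then obtain c1 c2 where "T \<subseteq> {c1, c2}" by blast
  then have "card T \<le> card {c1, c2}" by (intro card_mono) auto
  also have "\<dots> \<le> 2" by (simp add: card_insert_if)
  finally show ?thesis unfolding T_def .
qed

definition pedal_count :: "'a \<Rightarrow> nat" where
  "pedal_count k = card {c \<in> contacts. height c + eps = k}"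

lemma contacts_at_height:
  "{c \<in> contacts. height c + eps = k}
     = (if frob k - k = 2 * eps then {c. height c = k - eps} else {})"
proof -
  have "qf c = 2 * eps \<longleftrightarrow> frob k - k = 2 * eps" if "height c + eps = k" for c
  proof -
    have e: "frob k - k - 2 * eps = 2 * (qf c - 2 * eps)"
      using frob_height_eps_diff[of c] unfolding that by (simp add: algebra_simps)
    have "qf c = 2 * eps \<longleftrightarrow> 2 * (qf c - 2 * eps) = 0"
      by (simp only: mult_eq_0_iff two_neq_0 right_minus_eq simp_thms)
    also have "\<dots> \<longleftrightarrow> frob k - k = 2 * eps" unfolding e[symmetric] by simp
    finally show ?thesis .
  qed
  then show ?thesis unfolding contacts_def by (auto simp: algebra_simps)
qed

lemma pedal_count_cases:
  obtains "pedal_count k = 0"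
  | "frob k = k + 2 * eps" "pedal_count k = card {c. height c = k - eps}" "k - eps \<noteq> 0"
proof (cases "frob k - k = 2 * eps")
  case True
  moreover have "k - eps \<noteq> 0"
  proof
    assume "k - eps = 0"
    with True have "4 * eps = 0" by simp
    then show False by simp
  qed
  ultimately show ?thesis
    using that(2) unfolding pedal_count_def contacts_at_height by (simp add: algebra_simps)
qed (use that(1) in \<open>simp add: pedal_count_def contacts_at_height\<close>)

lemma pedal_count_nonsquare: "\<not> is_square \<alpha> \<Longrightarrow> pedal_count k \<in> {0, 2}"
proof (cases k rule: pedal_count_cases)
  case 2
  then show "\<not> is_square \<alpha> \<Longrightarrow> pedal_count k \<in> {0, 2}"
    using card_height_fibre(1)[OF 2(3)] by presburger
qed simp

lemma pedal_count_square: "is_square \<alpha> \<Longrightarrow> pedal_count k \<in> {0, 2, 4}"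
proof (cases k rule: pedal_count_cases)
  case 2
  then show "is_square \<alpha> \<Longrightarrow> pedal_count k \<in> {0, 2, 4}"
    using card_height_fibre(2)[OF 2(3)] by presburger
qed simp

lemma pedal_count_eq_2_imp:
  assumes "is_square \<alpha>" "pedal_count k = 2"
  shows "4 * disc * k ^ 2 + 8 * disc * eps * k + (16 * \<delta> ^ 2 * eps ^ 2 - 12 * disc * eps ^ 2) = 0"
proof (cases k rule: pedal_count_cases)
  case 2
  then have "4 * disc * ((k - eps) * frob (k - eps)) = - ((\<delta> * (frob (k - eps) - (k - eps))) ^ 2)"
    using card_height_fibre(3)[OF 2(3) assms(1)] assms(2) by simp
  moreover have "frob (k - eps) = k + 3 * eps" using 2(1) by simp
  ultimately show ?thesis by (simp add: algebra_simps power2_eq_square)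
qed (use assms in simp)

lemma lines_through_Uinf:
  assumes "L \<in> pg_lines" "pt (1, 0, 0) \<in> L"
  shows "L = line_of (0, 0, 1) \<or> (\<exists>k. L = line_of (0, 1, - k))"
proof -
  obtain a b d where L: "L = line_of (a, b, d)" "(a, b, d) \<noteq> (0, 0, 0)"
    using assms(1) by (rule pg_linesE)
  have a: "a = 0" using assms(2) unfolding L by simp
  show ?thesis
  proof (cases "b = 0")
    case True
    then have "L = line_of (smul3 d (0, 0, 1))" using L a by simp
    then show ?thesis using L a True line_of_smul3[of d "(0, 0, 1)"] by auto
  next
    case False
    then have "L = line_of (0, 1, - (- d / b))"
      using L a line_of_smul3[of b "(0, 1, d / b)"] by simp
    then show ?thesis by blast
  qed
qed

lemma card_pedal_horizontal_line: "card (line_of (0, 1, - k) \<inter> contact ` contacts) = pedal_count k"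
proof -
  have "line_of (0, 1, - k) \<inter> contact ` contacts = contact ` {c \<in> contacts. height c + eps = k}"
    using contact_in_line_of_iff by (auto simp: algebra_simps)
  then show ?thesis
    unfolding pedal_count_def using card_image[OF inj_on_subset[OF inj_contact]] by simp
qed

lemma card_pedal_line_through_Uinf:
  assumes "L \<in> pg_lines" "pt (1, 0, 0) \<in> L"
  shows "card (L \<inter> contact ` contacts) = 0 \<or> (\<exists>k. card (L \<inter> contact ` contacts) = pedal_count k)"
  using lines_through_Uinf[OF assms] card_pedal_horizontal_line contact_in_line_of_iff by auto

lemma card_pedal_line_not_through_Uinf:
  assumes "L \<in> pg_lines" "pt (1, 0, 0) \<notin> L"
  shows "card (L \<inter> contact ` contacts) \<le> 2"
proof -
  obtain a b d where L: "L = line_of (a, b, d)" "(a, b, d) \<noteq> (0, 0, 0)"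
    using assms(1) by (rule pg_linesE)
  have "a \<noteq> 0" using assms(2) unfolding L by simp
  have "L \<inter> contact ` contacts = contact ` {c \<in> contacts. a * c + b * (height c + eps) + d = 0}"
    unfolding L using contact_in_line_of_iff by auto
  then have "card (L \<inter> contact ` contacts) = card {c \<in> contacts. a * c + b * (height c + eps) + d = 0}"
    using card_image[OF inj_on_subset[OF inj_contact]] by simp
  then show ?thesis using card_contacts_on_line_le_2[OF \<open>a \<noteq> 0\<close>] by simp
qed

text \<open>The \<open>q + 1\<close> pedal points lie on the horizontal lines, each carrying \<open>0\<close>, \<open>2\<close> or \<open>4\<close> of
  them, and at most two of these lines (roots of a quadratic) carry exactly \<open>2\<close>.\<close>

lemma card_lines_meeting_pedal_in_4:
  assumes sq: "is_square \<alpha>"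
  shows "q + 1 \<le> 4 * card {L \<in> pg_lines. card (L \<inter> contact ` contacts) = 4} + 4"
proof -
  define K4 where "K4 = {k. pedal_count k = 4}"
  define K2 where "K2 = {k. pedal_count k = 2}"
  have "card K2 \<le> card {k. 4 * disc * k ^ 2 + 8 * disc * eps * k
      + (16 * \<delta> ^ 2 * eps ^ 2 - 12 * disc * eps ^ 2) = 0}"
    unfolding K2_def using pedal_count_eq_2_imp[OF sq] by (intro card_mono) auto
  also have "\<dots> \<le> 2" by (rule card_quadratic_roots_le_2) simp
  finally have "card K2 \<le> 2" .
  have K4: "card K4 \<le> card {L \<in> pg_lines. card (L \<inter> contact ` contacts) = 4}"
  proof (rule card_inj_on_le)
    show "inj_on (\<lambda>k. line_of (0, 1, - k)) K4"
    proof (rule inj_onI)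
      fix k k' assume "line_of (0, 1, - k) = line_of (0, 1, - k')"
      moreover have "pt (0, k, 1) \<in> line_of (0, 1, - k)" by simp
      ultimately have "pt (0, k, 1) \<in> line_of (0, 1, - k')" by simp
      then show "k = k'" by simp
    qed
    show "(\<lambda>k. line_of (0, 1, - k)) ` K4 \<subseteq> {L \<in> pg_lines. card (L \<inter> contact ` contacts) = 4}"
      unfolding K4_def using card_pedal_horizontal_line by (auto simp: line_of_in_pg_lines)
  qed simp
  have "q + 1 = (\<Sum>k\<in>UNIV. pedal_count k)"
    unfolding pedal_count_def card_contacts[symmetric] by (rule card_eq_sum_card_fibres) auto
  also have "\<dots> \<le> (\<Sum>k\<in>UNIV. 4 * of_bool (k \<in> K4) + 2 * of_bool (k \<in> K2))"
  proof (rule sum_mono)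
    fix k
    show "pedal_count k \<le> 4 * of_bool (k \<in> K4) + 2 * of_bool (k \<in> K2)"
      using pedal_count_square[OF sq, of k] unfolding K4_def K2_def by auto
  qed
  also have "\<dots> = 4 * card K4 + 2 * card K2"
    by (simp add: sum.distrib flip: sum_distrib_left)
  finally show ?thesis using \<open>card K2 \<le> 2\<close> K4 by linarith
qed

end

theorem lemma2p3:
  fixes q :: nat and \<alpha> \<beta> \<zeta> :: "'a::{field, finite}"
  assumes card: "card (UNIV :: 'a set) = q ^ 2"
    and odd: "odd q"
    and prim: "primitive_elem \<zeta>"
    and a0: "\<alpha> \<noteq> 0"
    and ns: "nonsquare_in_Fq q ((\<beta> ^ q - \<beta>) ^ 2 + 4 * \<alpha> ^ (q + 1))"
  defines "\<epsilon> \<equiv> \<zeta> ^ ((q + 1) div 2)"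
  defines "R1 \<equiv> pt (0, \<epsilon>, 1)"
  defines "Uinf \<equiv> pt (1, 0, 0)"
  defines "Ped \<equiv> pedal (unital_ab q \<alpha> \<beta>) R1"
  shows
    "(\<not> is_square \<alpha> \<longrightarrow>
        (\<forall>L \<in> pg_lines. Uinf \<in> L \<longrightarrow> card (L \<inter> Ped) \<in> {0, 2}))
     \<and> (is_square \<alpha> \<longrightarrow>
        (\<forall>L \<in> pg_lines. Uinf \<in> L \<longrightarrow> card (L \<inter> Ped) \<in> {0, 2, 4})
        \<and> (real q - 3) / 4 \<le> real (card {L \<in> pg_lines. card (L \<inter> Ped) = 4})
        \<and> (\<forall>L \<in> pg_lines. card (L \<inter> Ped) = 4 \<longrightarrow> Uinf \<in> L))"
proof -
  interpret unital_pedal q \<zeta> \<alpha> \<beta>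
    by unfold_locales (fact card odd prim a0 ns)+
  have Ped: "Ped = contact ` contacts"
    unfolding Ped_def R1_def \<epsilon>_def using pedal_R1 by (simp add: eps_def)
  show ?thesis
    unfolding Ped Uinf_def
  proof (intro conjI impI ballI)
    fix L :: "('a \<times> 'a \<times> 'a) set set"
    assume nsq: "\<not> is_square \<alpha>" and L: "L \<in> pg_lines" "pt (1, 0, 0) \<in> L"
    then show "card (L \<inter> contact ` contacts) \<in> {0, 2}"
      using card_pedal_line_through_Uinf[OF L] pedal_count_nonsquare[OF nsq] by (metis insertI1)
  next
    fix L :: "('a \<times> 'a \<times> 'a) set set"
    assume sq: "is_square \<alpha>" and L: "L \<in> pg_lines" "pt (1, 0, 0) \<in> L"
    then show "card (L \<inter> contact ` contacts) \<in> {0, 2, 4}"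
      using card_pedal_line_through_Uinf[OF L] pedal_count_square[OF sq] by (metis insertI1)
  next
    assume "is_square \<alpha>"
    then show "(real q - 3) / 4 \<le> real (card {L \<in> pg_lines. card (L \<inter> contact ` contacts) = 4})"
      using card_lines_meeting_pedal_in_4 by (simp add: field_simps flip: of_nat_le_iff)
  next
    fix L :: "('a \<times> 'a \<times> 'a) set set"
    assume "L \<in> pg_lines" "card (L \<inter> contact ` contacts) = 4"
    then show "pt (1, 0, 0) \<in> L" using card_pedal_line_not_through_Uinf by fastforce
  qed
qed

end
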